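(* Let $F$ be a face of $\delta\mathcal{A}_{\bm o}$, $\bm a,\bm b\in\operatorname{relint}(F)$, and $I,J,K$ a partition of $[m]$. Write $P_{\bm a}=P(\bm a,I,J,K)$ and $P_{\bm b}=P(\bm b,I,J,K)$. Then the map $\Phi$ from the face poset of $P_{\bm a}$ to that of $P_{\bm b}$ defined by $\Phi(\emptyset)=\emptyset$ and $\Phi(G)=P\big(\bm b,I_{P_{\bm a}}(G),J_{P_{\bm a}}(G),K_{P_{\bm a}}(G)\big)$ for nonempty faces $G$ is a well-defined bijection, and for each nonempty face $G$ of $P_{\bm a}$, $\Phi(G)$ is nonempty and has the same active triple index (with respect to $P_{\bm b}$) as $G$ (with respect to $P_{\bm a}$).
   Context: Fix nonzero $\bm u_1,\dots,\bm u_m\in\mathbb{R}^n$ (repetitions and parallel vectors allowed), $U$ the matrix with these rows; $U_I,\bm a_I$ denote rows/entries indexed by $I$. For a partition $I,J,K$ of $[m]$, $P(\bm a,I,J,K)=\{\bm x\in\mathbb{R}^n:U_I\bm x=\bm a_I,\ U_J\bm x\le\bm a_J,\ U_K\bm x\ge\bm a_K\}$; faces of a polyhedron include $\emptyset$ and the polyhedron itself. For a nonempty face $G$ of $P=P(\bm a,I,J,K)$: $I_P(G)=\{i\in[m]:\langle\bm u_i,\bm x\rangle=a_i\}$ for any $\bm x\in\operatorname{relint}(G)$, $J_P(G)=J\setminus I_P(G)$, $K_P(G)=K\setminus I_P(G)$; $(I_P(G),J_P(G),K_P(G))$ is the active triple index. A circuit is $C\subseteq[m]$ with $\{\bm u_i:i\in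 C\}$ a minimal linearly dependent indexed family; $\bm c^C$ satisfies $\sum c_i\bm u_i=\bm0$, $c_i\neq0\iff i\in C$. The derived arrangement $\delta\mathcal{A}_{\bm o}$ consists of the hyperplanes $\langle\bm c^C,\bm y\rangle=0$ in $\mathbb{R}^m$; its open faces are the nonempty sets $\{\bm y:\operatorname{sign}\langle \bm c^C,\bm y\rangle=\epsilon_C\ \forall C\}$, faces are their closures, and $\operatorname{relint}(F)$ is the open face with closure $F$. *)

theory Defs
  imports "HOL-Analysis.Analysis"
begin

text \<open>Vectors u_i indexed by a finite type 'm (the index set [m] is UNIV :: 'm set),
  living in real^'n.  Right-hand sides a are vectors in real^'m.\<close>

definition Pol :: "('m::finite \<Rightarrow> real^'n) \<Rightarrow> real^'m \<Rightarrow> 'm set \<Rightarrow> 'm set \<Rightarrow> 'm set \<Rightarrow> (real^'n) set" where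
  "Pol u a I J K = {x. (\<forall>i\<in>I. u i \<bullet> x = a $ i) \<and> (\<forall>i\<in>J. u i \<bullet> x \<le> a $ i)
                        \<and> (\<forall>i\<in>K. u i \<bullet> x \<ge> a $ i)}"

definition act_I :: "('m::finite \<Rightarrow> real^'n) \<Rightarrow> real^'m \<Rightarrow> (real^'n) set \<Rightarrow> 'm set" where
  "act_I u a G = {i. u i \<bullet> (SOME x. x \<in> rel_interior G) = a $ i}"

definition lin_dep_fam :: "('m::finite \<Rightarrow> real^'n) \<Rightarrow> 'm set \<Rightarrow> bool" where
  "lin_dep_fam u C = (\<exists>c. (\<Sum>i\<in>C. c i *\<^sub>R u i) = 0 \<and> (\<exists>i\<in>C. c i \<noteq> 0))"

definition circuit :: "('m::finite \<Rightarrow> real^'n) \<Rightarrow> 'm set \<Rightarrow> bool" where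
  "circuit u C = (lin_dep_fam u C \<and> (\<forall>D. D \<subset> C \<longrightarrow> \<not> lin_dep_fam u D))"

definition circuit_vec :: "('m::finite \<Rightarrow> real^'n) \<Rightarrow> 'm set \<Rightarrow> real^'m" where
  "circuit_vec u C = (SOME c. (\<Sum>i\<in>UNIV. (c $ i) *\<^sub>R u i) = 0 \<and> (\<forall>i. c $ i \<noteq> 0 \<longleftrightarrow> i \<in> C))"

definition derived_open_face :: "('m::finite \<Rightarrow> real^'n) \<Rightarrow> (real^'m) set \<Rightarrow> bool" where
  "derived_open_face u S = (S \<noteq> {} \<and> (\<exists>\<epsilon> :: 'm set \<Rightarrow> real.
      S = {y. \<forall>C. circuit u C \<longrightarrow> sgn (circuit_vec u C \<bullet> y) = \<epsilon> C}))"

definition derived_face :: "('m::finite \<Rightarrow> real^'n) \<Rightarrow> (real^'m) set \<Rightarrow> bool" where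
  "derived_face u F = (\<exists>S. derived_open_face u S \<and> F = closure S)"

definition derived_relint :: "('m::finite \<Rightarrow> real^'n) \<Rightarrow> (real^'m) set \<Rightarrow> (real^'m) set" where
  "derived_relint u F = (THE S. derived_open_face u S \<and> closure S = F)"

definition Phi :: "('m::finite \<Rightarrow> real^'n) \<Rightarrow> real^'m \<Rightarrow> real^'m \<Rightarrow> 'm set \<Rightarrow> 'm set
                    \<Rightarrow> (real^'n) set \<Rightarrow> (real^'n) set" where
  "Phi u a b J K G = (if G = {} then {}
      else Pol u b (act_I u a G) (J - act_I u a G) (K - act_I u a G))"

end

theory Submission
  imports Defs
begin

text \<open>A nonempty face of \<open>P(y,I,J,K)\<close> is determined by its active set \<open>A\<close>, and a given \<open>A \<supseteq> I\<close>
  is the active set of a face iff the sign vector which is \<open>0\<close> on \<open>A\<close>, \<open>-1\<close> on \<open>J - A\<close> and \<open>+1\<close>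
  on \<open>K - A\<close> is realized by the affine functions \<open>x \<mapsto> \<langle>u\<^sub>i, x\<rangle> - y\<^sub>i\<close>.
  After homogenizing to the vectors \<open>(u\<^sub>i, -y\<^sub>i)\<close> and \<open>(0, 1)\<close>, Motzkin's transposition theorem
  says that a sign vector is not realized iff some linear dependency of these vectors is
  sign-conformal to it. A dependency of minimal support can be chosen whose \<open>u\<close>-part is supported
  on a circuit \<open>C\<close>; then it is a multiple of \<open>c\<^sup>C\<close>, and it depends on \<open>y\<close> only through the sign
  of \<open>\<langle>c\<^sup>C, y\<rangle>\<close>. These signs agree for all \<open>y\<close> in the relative interior of a face of the
  derived arrangement, so \<open>a\<close> and \<open>b\<close> realize the same sign vectors. Consequently \<open>\<Phi>\<close> maps faces to
  faces with the same active sets, and the map defined symmetrically from \<open>P\<^sub>b\<close> to \<open>P\<^sub>a\<close> is its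
  inverse.\<close>

section \<open>Sign-conformal certificates\<close>

lemma ratio_test:
  fixes e c :: "'k::finite \<Rightarrow> real"
  assumes "\<exists>k. 0 < c k * e k"
  obtains t where "0 < t" "\<And>k. 0 \<le> (e k - t * c k) * e k"
    "\<exists>k. 0 < c k * e k \<and> e k - t * c k = 0"
proof -
  define Q where "Q = {k. 0 < c k * e k}"
  define t where "t = Min ((\<lambda>k. e k / c k) ` Q)"
  have "Q \<noteq> {}" using assms by (simp add: Q_def)
  then have "t \<in> (\<lambda>k. e k / c k) ` Q"
    unfolding t_def by (intro Min_in) auto
  then obtain k0 where k0: "k0 \<in> Q" "t = e k0 / c k0" by blast
  have t_le: "t \<le> e k / c k" if "k \<in> Q" for k
    using that by (simp add: t_def)
  have ratio_pos: "0 < e k / c k" if "k \<in> Q" for k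
    using that by (auto simp: Q_def zero_less_mult_iff zero_less_divide_iff)
  have expand: "(e k - t * c k) * e k = e k * e k - t * (c k * e k)" for k
    by (simp add: algebra_simps)
  have "0 < t" using ratio_pos k0 by simp
  moreover have "0 \<le> (e k - t * c k) * e k" for k
  proof (cases "k \<in> Q")
    case True
    then have "t * (c k * e k) \<le> e k / c k * (c k * e k)"
      using t_le by (intro mult_right_mono) (auto simp: Q_def)
    then show ?thesis using True by (auto simp: expand Q_def split: if_splits)
  next
    case False
    then have "t * (c k * e k) \<le> 0"
      using \<open>0 < t\<close> by (simp add: Q_def mult_nonneg_nonpos)
    then show ?thesis using zero_le_square[of "e k"] by (subst expand) linarith
  qed
  moreover have "0 < c k0 * e k0 \<and> e k0 - t * c k0 = 0"
    using k0 by (auto simp: Q_def)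
  ultimately show thesis using that by blast
qed

lemma mult_nonneg_sign_trans:
  fixes x y s :: real
  assumes "0 \<le> x * y" "0 < y * s"
  shows "0 \<le> x * s"
  using assms by (auto simp: zero_le_mult_iff zero_less_mult_iff)

lemma conformal_ratio_step:
  fixes e c s :: "'k::finite \<Rightarrow> real"
  assumes conformal: "\<And>k. 0 \<le> e k * s k" and "\<exists>k. 0 < c k * e k"
  obtains t where "0 < t" "\<And>k. e k \<noteq> 0 \<Longrightarrow> 0 \<le> (e k - t * c k) * s k"
    "\<exists>k. e k \<noteq> 0 \<and> e k - t * c k = 0"
proof -
  obtain t where t: "0 < t" "\<And>k. 0 \<le> (e k - t * c k) * e k"
    "\<exists>k. 0 < c k * e k \<and> e k - t * c k = 0"
    using assms(2) by (rule ratio_test) blast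
  have "0 \<le> (e k - t * c k) * s k" if "e k \<noteq> 0" for k
  proof (cases "s k = 0")
    case False
    then have "0 < e k * s k"
      using conformal[of k] that by (simp add: order_le_neq_trans)
    then show ?thesis using mult_nonneg_sign_trans[OF t(2)] by blast
  qed simp
  moreover have "\<exists>k. e k \<noteq> 0 \<and> e k - t * c k = 0"
    using t(3) by force
  ultimately show thesis using that t(1) by blast
qed

lemma sum_scaleR_diff:
  fixes w :: "'k \<Rightarrow> 'v::real_vector"
  shows "(\<Sum>k\<in>A. (e k - t * c k) *\<^sub>R w k) = (\<Sum>k\<in>A. e k *\<^sub>R w k) - t *\<^sub>R (\<Sum>k\<in>A. c k *\<^sub>R w k)"
  by (simp add: scaleR_diff_left sum_subtractf scaleR_sum_right)

text \<open>A certificate that no functional has sign vector \<open>s\<close> on \<open>w\<close>; see \<open>motzkin_transposition\<close>.\<close>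

definition certificate :: "('k::finite \<Rightarrow> 'v::real_vector) \<Rightarrow> ('k \<Rightarrow> real) \<Rightarrow> ('k \<Rightarrow> real) \<Rightarrow> bool" where
  "certificate w s e \<longleftrightarrow> (\<Sum>k\<in>UNIV. e k *\<^sub>R w k) = 0 \<and> (\<forall>k. 0 \<le> e k * s k) \<and> (\<exists>k. e k * s k \<noteq> 0)"

lemma certificate_shrink_oriented:
  fixes w :: "'k::finite \<Rightarrow> 'v::real_vector"
  assumes e: "certificate w s e"
    and c: "(\<Sum>k\<in>UNIV. c k *\<^sub>R w k) = 0" "{k. c k \<noteq> 0} \<subset> {k. e k \<noteq> 0}" "\<exists>k. 0 < c k * s k"
  shows "\<exists>e'. certificate w s e' \<and> {k. e' k \<noteq> 0} \<subset> {k. e k \<noteq> 0}"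
proof -
  have e_dep: "(\<Sum>k\<in>UNIV. e k *\<^sub>R w k) = 0" and e_conf: "\<And>k. 0 \<le> e k * s k"
    using e by (auto simp: certificate_def)
  have c_e: "e k \<noteq> 0" if "c k \<noteq> 0" for k
    using that c(2) by blast
  obtain j where j: "0 < c j * s j" using c(3) by blast
  then have "c j \<noteq> 0" "s j \<noteq> 0" by auto
  then have "e j \<noteq> 0" "s j \<noteq> 0" using c_e by blast+
  then have "0 < e j * s j"
    using e_conf[of j] by (simp add: order_le_neq_trans)
  with j have "\<exists>k. 0 < c k * e k" by (auto simp: zero_less_mult_iff)
  then obtain t where t: "0 < t" "\<And>k. e k \<noteq> 0 \<Longrightarrow> 0 \<le> (e k - t * c k) * s k"
    "\<exists>k. e k \<noteq> 0 \<and> e k - t * c k = 0"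
    by (rule conformal_ratio_step[OF e_conf]) blast
  define e' where "e' k = e k - t * c k" for k
  have e'_dep: "(\<Sum>k\<in>UNIV. e' k *\<^sub>R w k) = 0"
    unfolding e'_def sum_scaleR_diff using e_dep c(1) by simp
  have e'_conf: "0 \<le> e' k * s k" for k
  proof (cases "e k = 0")
    case True
    then have "c k = 0" using c_e by blast
    with True show ?thesis by (simp add: e'_def)
  qed (simp add: t(2) e'_def)
  have e'_supp: "{k. e' k \<noteq> 0} \<subset> {k. e k \<noteq> 0}"
  proof -
    have "{k. e' k \<noteq> 0} \<subseteq> {k. e k \<noteq> 0}"
      using c_e by (auto simp: e'_def)
    moreover obtain k0 where "e k0 \<noteq> 0" "e' k0 = 0"
      using t(3) by (auto simp: e'_def)
    ultimately show ?thesis by force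
  qed
  show ?thesis
  proof (cases "\<exists>k. e' k * s k \<noteq> 0")
    case True
    then show ?thesis using e'_dep e'_conf e'_supp by (auto simp: certificate_def)
  next
    case False
    \<comment> \<open>then \<open>e = t c\<close> wherever \<open>s \<noteq> 0\<close>, so \<open>c\<close> is conformal itself\<close>
    have "0 \<le> c k * s k" for k
    proof -
      have "e k * s k = t * (c k * s k)"
        using False by (auto simp: e'_def algebra_simps)
      then have "0 \<le> t * (c k * s k)" using e_conf[of k] by linarith
      then show ?thesis using \<open>0 < t\<close> by (metis mult_zero_right mult_le_cancel_left_pos)
    qed
    then have "certificate w s c"
      using c(1) j unfolding certificate_def by (auto intro!: exI[of _ j])
    then show ?thesis using c(2) by blast
  qed
qed

lemma certificate_shrink:
  fixes w :: "'k::finite \<Rightarrow> 'v::real_vector"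
  assumes e: "certificate w s e"
    and c: "(\<Sum>k\<in>UNIV. c k *\<^sub>R w k) = 0" "\<exists>k. c k \<noteq> 0"
    and supp: "{k. c k \<noteq> 0} \<subset> {k. e k \<noteq> 0}"
  shows "\<exists>e'. certificate w s e' \<and> {k. e' k \<noteq> 0} \<subset> {k. e k \<noteq> 0}"
proof (cases "\<exists>k. c k * s k \<noteq> 0")
  case True
  then consider "\<exists>k. 0 < c k * s k" | "\<exists>k. 0 < - c k * s k"
    by (metis neg_0_less_iff_less mult_minus_left linorder_neqE_linordered_idom)
  then show ?thesis
  proof cases
    case 1
    then show ?thesis using certificate_shrink_oriented[OF e c(1) supp] by blast
  next
    case 2
    have "(\<Sum>k\<in>UNIV. - c k *\<^sub>R w k) = 0" using c(1) by (simp add: sum_negf)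
    then show ?thesis using certificate_shrink_oriented[OF e, of "\<lambda>k. - c k"] supp 2 by simp
  qed
next
  case False
  have e_dep: "(\<Sum>k\<in>UNIV. e k *\<^sub>R w k) = 0"
    using e by (simp add: certificate_def)
  obtain k1 where k1: "c k1 \<noteq> 0" using c(2) by blast
  define e' where "e' k = e k - (e k1 / c k1) * c k" for k
  have e'_dep: "(\<Sum>k\<in>UNIV. e' k *\<^sub>R w k) = 0"
    unfolding e'_def sum_scaleR_diff using e_dep c(1) by simp
  have e'_sign: "e' k * s k = e k * s k" for k
    using False by (auto simp: e'_def algebra_simps)
  have "certificate w s e'"
    using e e'_dep unfolding certificate_def e'_sign by simp
  moreover have "{k. e' k \<noteq> 0} \<subset> {k. e k \<noteq> 0}"
  proof -
    have c_e: "e k \<noteq> 0" if "c k \<noteq> 0" for k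
      using that supp by blast
    then have "{k. e' k \<noteq> 0} \<subseteq> {k. e k \<noteq> 0}"
      by (auto simp: e'_def)
    moreover have "e' k1 = 0" "e k1 \<noteq> 0" using k1 c_e by (auto simp: e'_def)
    ultimately show ?thesis by force
  qed
  ultimately show ?thesis by blast
qed

lemma certificate_neg_anticonformal:
  fixes w :: "'k::finite \<Rightarrow> 'v::real_vector"
  assumes e: "certificate w s e" and c: "(\<Sum>k\<in>UNIV. c k *\<^sub>R w k) = 0"
    and anti: "\<And>k. c k * e k \<le> 0" and k0: "c k0 * s k0 < 0"
    and supp: "\<And>k. k \<noteq> k0 \<Longrightarrow> c k \<noteq> 0 \<Longrightarrow> e k \<noteq> 0"
  shows "certificate w s (\<lambda>k. - c k)"
  unfolding certificate_def
proof (intro conjI allI exI)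
  show "(\<Sum>k\<in>UNIV. - c k *\<^sub>R w k) = 0"
    using c by (simp add: sum_negf)
  show "- c k0 * s k0 \<noteq> 0" using k0 by linarith
next
  fix k
  show "0 \<le> - c k * s k"
  proof (cases "k = k0 \<or> c k = 0 \<or> s k = 0")
    case False
    then have "e k \<noteq> 0" "s k \<noteq> 0" using supp by auto
    then have "0 < e k * s k"
      using e by (simp add: certificate_def order_le_neq_trans)
    moreover have "0 \<le> - c k * e k" using anti[of k] by simp
    ultimately show ?thesis by (rule mult_nonneg_sign_trans[rotated])
  qed (use k0 in auto)
qed

lemma certificate_shrink_None:
  fixes w :: "'m::finite option \<Rightarrow> 'v::real_vector"
  assumes s_None: "s None = 1" and e: "certificate w s e" "e None = 0"
    and c: "(\<Sum>k\<in>UNIV. c k *\<^sub>R w k) = 0" "c None \<noteq> 0"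
    and supp: "{i. c (Some i) \<noteq> 0} \<subset> {i. e (Some i) \<noteq> 0}"
  shows "\<exists>e'. certificate w s e' \<and> {i. e' (Some i) \<noteq> 0} \<subset> {i. e (Some i) \<noteq> 0}"
proof -
  have e_dep: "(\<Sum>k\<in>UNIV. e k *\<^sub>R w k) = 0" and e_conf: "\<And>k. 0 \<le> e k * s k"
    using e by (auto simp: certificate_def)
  \<comment> \<open>orient \<open>c\<close> so that moving from \<open>e\<close> against \<open>c\<close> makes the \<open>None\<close> entry positive\<close>
  define c' where "c' k = - sgn (c None) * c k" for k
  have "(\<Sum>k\<in>UNIV. c' k *\<^sub>R w k) = - sgn (c None) *\<^sub>R (\<Sum>k\<in>UNIV. c k *\<^sub>R w k)"
    by (simp add: c'_def scaleR_sum_right)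
  then have c'_dep: "(\<Sum>k\<in>UNIV. c' k *\<^sub>R w k) = 0"
    using c(1) by simp
  have c'_None: "c' None < 0"
    using c(2) by (simp add: c'_def abs_sgn[symmetric] mult.commute)
  have c'_Some: "c' (Some i) \<noteq> 0 \<longleftrightarrow> c (Some i) \<noteq> 0" for i
    using c(2) by (simp add: c'_def sgn_eq_0_iff)
  have c'_zero: "c' (Some i) = 0" if "e (Some i) = 0" for i
    using that supp c'_Some by blast
  show ?thesis
  proof (cases "\<exists>k. 0 < c' k * e k")
    case True
    then obtain t where t: "0 < t" "\<And>k. e k \<noteq> 0 \<Longrightarrow> 0 \<le> (e k - t * c' k) * s k"
      "\<exists>k. e k \<noteq> 0 \<and> e k - t * c' k = 0"
      by (rule conformal_ratio_step[OF e_conf]) blast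
    define e' where "e' k = e k - t * c' k" for k
    have e'_None: "0 < e' None"
      using e(2) c'_None t(1) by (simp add: e'_def mult_pos_neg)
    have "certificate w s e'"
      unfolding certificate_def
    proof (intro conjI allI exI)
      show "(\<Sum>k\<in>UNIV. e' k *\<^sub>R w k) = 0"
        unfolding e'_def sum_scaleR_diff using e_dep c'_dep by simp
      show "e' None * s None \<noteq> 0" using e'_None s_None by simp
    next
      fix k
      show "0 \<le> e' k * s k"
      proof (cases "e k = 0")
        case True
        then show ?thesis
          using e'_None s_None c'_zero by (cases k) (auto simp: e'_def)
      qed (simp add: t(2) e'_def)
    qed
    moreover have "{i. e' (Some i) \<noteq> 0} \<subset> {i. e (Some i) \<noteq> 0}"
    proof -
      have "{i. e' (Some i) \<noteq> 0} \<subseteq> {i. e (Some i) \<noteq> 0}"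
        using c'_zero by (auto simp: e'_def)
      moreover obtain k0 where k0: "e k0 \<noteq> 0" "e' k0 = 0"
        using t(3) by (auto simp: e'_def)
      moreover obtain i0 where "k0 = Some i0"
        using k0(1) e(2) by (cases k0) auto
      ultimately show ?thesis by force
    qed
    ultimately show ?thesis by blast
  next
    case False
    then have "certificate w s (\<lambda>k. - c' k)"
      using certificate_neg_anticonformal[OF e(1) c'_dep, of None] c'_None s_None c'_zero
      by (fastforce simp: not_less)
    moreover have "{i. - c' (Some i) \<noteq> 0} \<subset> {i. e (Some i) \<noteq> 0}"
      using supp c'_Some by simp
    ultimately show ?thesis by blast
  qed
qed

text \<open>Entries at \<open>Some\<close> count twice, so the weight drops even when a \<open>Some\<close> entry is traded for
  the \<open>None\<close> entry.\<close>

definition support_weight :: "('m::finite option \<Rightarrow> real) \<Rightarrow> nat" where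
  "support_weight e = 2 * card {i. e (Some i) \<noteq> 0} + (if e None = 0 then 0 else 1)"

lemma support_weight_less_Some:
  assumes "{i. e' (Some i) \<noteq> 0} \<subset> {i. e (Some i) \<noteq> 0}"
  shows "support_weight e' < support_weight e"
  using psubset_card_mono[OF finite assms] by (simp add: support_weight_def)

lemma support_weight_less:
  assumes "{k. e' k \<noteq> 0} \<subset> {k. e k \<noteq> 0}"
  shows "support_weight e' < support_weight e"
proof -
  have Some_sub: "{i. e' (Some i) \<noteq> 0} \<subseteq> {i. e (Some i) \<noteq> 0}"
    using assms by auto
  obtain k where k: "e k \<noteq> 0" "e' k = 0" using assms by auto
  show ?thesis
  proof (cases k)
    case None
    then show ?thesis
      using k card_mono[OF finite Some_sub] assms by (auto simp: support_weight_def)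
  next
    case (Some i)
    then have "{i. e' (Some i) \<noteq> 0} \<subset> {i. e (Some i) \<noteq> 0}"
      using Some_sub k by auto
    then show ?thesis by (rule support_weight_less_Some)
  qed
qed

section \<open>Motzkin's transposition theorem for sign vectors\<close>

lemma convex_hull_image_sum:
  fixes f :: "'k \<Rightarrow> 'v::real_vector"
  assumes "finite S" "x \<in> convex hull (f ` S)"
  shows "\<exists>\<mu>. (\<forall>k\<in>S. 0 \<le> \<mu> k) \<and> sum \<mu> S = 1 \<and> x = (\<Sum>k\<in>S. \<mu> k *\<^sub>R f k)"
proof -
  define P where "P = {\<Sum>k\<in>S. \<mu> k *\<^sub>R f k | \<mu>. (\<forall>k\<in>S. 0 \<le> \<mu> k) \<and> sum \<mu> S = 1}"
  have "f k \<in> P" if "k \<in> S" for k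
  proof -
    have "f k = (\<Sum>j\<in>S. (if j = k then 1 else 0) *\<^sub>R f j)"
      using that assms(1) by (simp add: if_distrib[of "\<lambda>r. r *\<^sub>R _"] sum.delta' cong: if_cong)
    then show ?thesis
      unfolding P_def using that assms(1) by (intro CollectI exI[of _ "\<lambda>j. if j = k then 1 else 0"]) auto
  qed
  moreover have "convex P"
  proof (rule convexI)
    fix x y and a b :: real
    assume "x \<in> P" "y \<in> P" and ab: "0 \<le> a" "0 \<le> b" "a + b = 1"
    then obtain \<mu> \<nu> where \<mu>: "\<forall>k\<in>S. 0 \<le> \<mu> k" "sum \<mu> S = 1" "x = (\<Sum>k\<in>S. \<mu> k *\<^sub>R f k)"
      and \<nu>: "\<forall>k\<in>S. 0 \<le> \<nu> k" "sum \<nu> S = 1" "y = (\<Sum>k\<in>S. \<nu> k *\<^sub>R f k)"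
      unfolding P_def by blast
    have "a *\<^sub>R x + b *\<^sub>R y = (\<Sum>k\<in>S. (a * \<mu> k + b * \<nu> k) *\<^sub>R f k)"
      by (simp add: \<mu>(3) \<nu>(3) scaleR_sum_right scaleR_add_left sum.distrib)
    moreover have "sum (\<lambda>k. a * \<mu> k + b * \<nu> k) S = 1"
      using \<mu>(2) \<nu>(2) ab(3) by (simp add: sum.distrib flip: sum_distrib_left)
    ultimately show "a *\<^sub>R x + b *\<^sub>R y \<in> P"
      unfolding P_def using \<mu>(1) \<nu>(1) ab by force
  qed
  ultimately have "convex hull (f ` S) \<subseteq> P"
    by (intro hull_minimal) auto
  then show ?thesis using assms(2) unfolding P_def by blast
qed

lemma real_line_bounded_below:
  fixes b c x :: real
  assumes "\<And>r. b < c + r * x"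
  shows "x = 0"
proof (rule ccontr)
  assume "x \<noteq> 0"
  then show False using assms[of "(b - c) / x"] by simp
qed

lemma certificate_imp_unrealizable:
  fixes w :: "'k::finite \<Rightarrow> 'v::real_inner"
  assumes "certificate w s e"
  shows "\<not> (\<exists>z. \<forall>k. sgn (w k \<bullet> z) = s k)"
proof
  assume "\<exists>z. \<forall>k. sgn (w k \<bullet> z) = s k"
  then obtain z where z: "\<And>k. sgn (w k \<bullet> z) = s k" by blast
  obtain k0 where dep: "(\<Sum>k\<in>UNIV. e k *\<^sub>R w k) = 0" and conf: "\<And>k. 0 \<le> e k * s k"
    and k0: "e k0 * s k0 \<noteq> 0" using assms by (auto simp: certificate_def)
  have summand: "e k * (w k \<bullet> z) = (e k * s k) * \<bar>w k \<bullet> z\<bar>" for k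
    using sgn_mult_abs[of "w k \<bullet> z"] by (simp add: z)
  have "0 = (\<Sum>k\<in>UNIV. e k *\<^sub>R w k) \<bullet> z" by (simp add: dep)
  also have "\<dots> = (\<Sum>k\<in>UNIV. e k * (w k \<bullet> z))" by (simp add: inner_sum_left)
  also have "\<dots> > 0"
  proof (rule sum_pos2[of UNIV k0])
    have "0 < e k0 * s k0"
      using order_le_neq_trans[OF conf[of k0] not_sym[OF k0]] .
    moreover have "w k0 \<bullet> z \<noteq> 0" using z[of k0] k0 by auto
    ultimately show "0 < e k0 * (w k0 \<bullet> z)"
      unfolding summand by simp
    show "0 \<le> e k * (w k \<bullet> z)" for k
      using conf[of k] by (simp add: summand)
  qed simp_all
  finally show False by simp
qed

lemma certificate_of_zero_sum:
  fixes w :: "'k::finite \<Rightarrow> 'v::real_vector"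
  assumes s: "\<forall>k. s k \<in> {-1, 0, 1}"
    and p: "p \<in> convex hull ((\<lambda>k. s k *\<^sub>R w k) ` {k. s k \<noteq> 0})"
    and l: "l \<in> range (\<lambda>\<nu>::real^'k. \<Sum>k\<in>{k. s k = 0}. \<nu> $ k *\<^sub>R w k)"
    and "0 = p + l"
  shows "\<exists>e. certificate w s e"
proof -
  define S where "S = {k. s k \<noteq> 0}"
  have s_sq: "s k * s k = 1" if "k \<in> S" for k
    using s[rule_format, of k] that by (auto simp: S_def)
  obtain \<mu> where \<mu>: "\<forall>k\<in>S. 0 \<le> \<mu> k" "sum \<mu> S = 1" "p = (\<Sum>k\<in>S. \<mu> k *\<^sub>R (s k *\<^sub>R w k))"
    using convex_hull_image_sum[OF finite p] unfolding S_def by blast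
  have "{k. s k = 0} = - S" by (auto simp: S_def)
  then obtain \<nu> where \<nu>: "l = (\<Sum>k\<in>-S. \<nu> $ k *\<^sub>R w k)"
    using l by auto
  define e where "e k = (if k \<in> S then \<mu> k * s k else \<nu> $ k)" for k
  have "(\<Sum>k\<in>UNIV. e k *\<^sub>R w k) = (\<Sum>k\<in>UNIV. if k \<in> S then \<mu> k *\<^sub>R (s k *\<^sub>R w k) else \<nu> $ k *\<^sub>R w k)"
    by (intro sum.cong) (auto simp: e_def)
  also have "\<dots> = p + l"
    unfolding sum.If_cases[OF finite] \<mu>(3) \<nu> by (simp add: Compl_eq)
  finally have "(\<Sum>k\<in>UNIV. e k *\<^sub>R w k) = 0" using \<open>0 = p + l\<close> by simp
  moreover have "e k * s k = (if k \<in> S then \<mu> k else 0)" for k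
    using s_sq by (simp add: e_def S_def mult.assoc)
  moreover obtain k0 where "k0 \<in> S" "\<mu> k0 \<noteq> 0"
    using \<mu>(2) sum.neutral[of S \<mu>] by (metis zero_neq_one)
  ultimately have "certificate w s e"
    unfolding certificate_def using \<mu>(1) by (metis order_refl)
  then show ?thesis by blast
qed

lemma unrealizable_imp_certificate:
  fixes w :: "'k::finite \<Rightarrow> 'v::euclidean_space"
  assumes s: "\<forall>k. s k \<in> {-1, 0, 1}" and unrealizable: "\<not> (\<exists>z. \<forall>k. sgn (w k \<bullet> z) = s k)"
  shows "\<exists>e. certificate w s e"
proof -
  define H where "H = convex hull ((\<lambda>k. s k *\<^sub>R w k) ` {k. s k \<noteq> 0})"
  define L where "L = range (\<lambda>\<nu>::real^'k. \<Sum>k\<in>{k. s k = 0}. \<nu> $ k *\<^sub>R w k)"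
  define M where "M = (\<Union>p\<in>H. \<Union>l\<in>L. {p + l})"
  have "subspace L"
    unfolding L_def
    by (intro linear_subspace_image subspace_UNIV linearI)
      (simp_all add: scaleR_add_left sum.distrib scaleR_sum_right)
  \<comment> \<open>otherwise a hyperplane separating \<open>0\<close> from \<open>H + L\<close> would realize \<open>s\<close>\<close>
  have "0 \<in> M"
  proof (rule ccontr)
    assume "0 \<notin> M"
    moreover have "closed M"
      unfolding M_def H_def using \<open>subspace L\<close>
      by (intro compact_closed_sums compact_convex_hull finite_imp_compact closed_subspace) auto
    moreover have "convex M"
      unfolding M_def H_def using \<open>subspace L\<close>
      by (intro convex_sums convex_convex_hull subspace_imp_convex)
    ultimately obtain a b where "0 < b" "\<forall>x\<in>M. b < a \<bullet> x"
      using separating_hyperplane_closed_0[of M] by blast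
    then have ab: "0 < b" "\<And>p l. p \<in> H \<Longrightarrow> l \<in> L \<Longrightarrow> b < a \<bullet> (p + l)"
      unfolding M_def by blast+
    have in_H: "s k *\<^sub>R w k \<in> H" if "s k \<noteq> 0" for k
      unfolding H_def using that by (simp add: hull_inc)
    have in_L: "r *\<^sub>R w k \<in> L" if "s k = 0" for k r
    proof -
      have "(\<Sum>j\<in>{k. s k = 0}. (\<chi> i. if i = k then r else 0) $ j *\<^sub>R w j)
          = (\<Sum>j\<in>{k. s k = 0}. if j = k then r *\<^sub>R w j else 0)"
        by (intro sum.cong) auto
      also have "\<dots> = r *\<^sub>R w k"
        using that by (simp add: sum.delta)
      finally show ?thesis unfolding L_def by (rule range_eqI[OF sym])
    qed
    obtain k1 where "s k1 \<noteq> 0"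
      using unrealizable[unfolded not_ex, rule_format, of 0] by auto
    have "sgn (w k \<bullet> a) = s k" for k
    proof (cases "s k = 0")
      case False
      have "b < a \<bullet> (s k *\<^sub>R w k + 0)"
        using ab(2)[OF in_H[OF False] subspace_0[OF \<open>subspace L\<close>]] .
      then have "0 < s k * (w k \<bullet> a)" using ab(1) by (simp add: inner_commute)
      then show ?thesis using s[rule_format, of k] by (auto simp: sgn_if zero_less_mult_iff)
    next
      case True
      have "b < a \<bullet> (s k1 *\<^sub>R w k1) + r * (w k \<bullet> a)" for r
        using ab(2)[OF in_H[OF \<open>s k1 \<noteq> 0\<close>] in_L[OF True]]
        by (simp add: inner_add_right inner_commute)
      then show ?thesis using True real_line_bounded_below by fastforce
    qed
    then show False using unrealizable by blast
  qed
  then obtain p l where "p \<in> H" "l \<in> L" "0 = p + l"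
    unfolding M_def by blast
  then show ?thesis
    using certificate_of_zero_sum[OF s, of p w l] unfolding H_def L_def by blast
qed

lemma motzkin_transposition:
  fixes w :: "'k::finite \<Rightarrow> 'v::euclidean_space"
  assumes "\<forall>k. s k \<in> {-1, 0, 1}"
  shows "(\<exists>z. \<forall>k. sgn (w k \<bullet> z) = s k) \<longleftrightarrow> \<not> (\<exists>e. certificate w s e)"
  using certificate_imp_unrealizable unrealizable_imp_certificate[OF assms] by blast

section \<open>Homogenization and circuits\<close>

lemma sum_UNIV_option:
  fixes f :: "'a::finite option \<Rightarrow> 'b::comm_monoid_add"
  shows "(\<Sum>k\<in>UNIV. f k) = f None + (\<Sum>i\<in>UNIV. f (Some i))"
  by (simp add: UNIV_option_conv sum.reindex)

definition homog :: "('m::finite \<Rightarrow> real^'n) \<Rightarrow> real^'m \<Rightarrow> 'm option \<Rightarrow> (real^'n) \<times> real" where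
  "homog u y = case_option (0, 1) (\<lambda>i. (u i, - y $ i))"

lemma homog_inner:
  "homog u y k \<bullet> (x, t) = (case k of None \<Rightarrow> t | Some i \<Rightarrow> u i \<bullet> x - t * y $ i)"
  by (cases k) (simp_all add: homog_def)

lemma homog_dependency_iff:
  "(\<Sum>k\<in>UNIV. e k *\<^sub>R homog u y k) = 0 \<longleftrightarrow>
     (\<Sum>i\<in>UNIV. e (Some i) *\<^sub>R u i) = 0 \<and> e None = (\<Sum>i\<in>UNIV. e (Some i) * y $ i)"
proof -
  have "(\<Sum>k\<in>UNIV. e k *\<^sub>R homog u y k)
      = ((\<Sum>i\<in>UNIV. e (Some i) *\<^sub>R u i), e None - (\<Sum>i\<in>UNIV. e (Some i) * y $ i))"
    by (simp add: sum_UNIV_option homog_def prod_eq_iff fst_sum snd_sum sum_negf)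
  then show ?thesis by (auto simp: prod_eq_iff)
qed

lemma realizable_iff_homog:
  "(\<exists>x. \<forall>i. sgn (u i \<bullet> x - y $ i) = \<sigma> i) \<longleftrightarrow>
   (\<exists>z. \<forall>k. sgn (homog u y k \<bullet> z) = case_option 1 \<sigma> k)"
proof
  assume "\<exists>x. \<forall>i. sgn (u i \<bullet> x - y $ i) = \<sigma> i"
  then obtain x where "\<And>i. sgn (u i \<bullet> x - y $ i) = \<sigma> i" by blast
  then have "sgn (homog u y k \<bullet> (x, 1)) = case_option 1 \<sigma> k" for k
    by (cases k) (simp_all add: homog_inner)
  then show "\<exists>z. \<forall>k. sgn (homog u y k \<bullet> z) = case_option 1 \<sigma> k" by blast
next
  assume "\<exists>z. \<forall>k. sgn (homog u y k \<bullet> z) = case_option 1 \<sigma> k"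
  then obtain x t where xt: "\<And>k. sgn (homog u y k \<bullet> (x, t)) = case_option 1 \<sigma> k"
    by (metis surj_pair)
  have "0 < t" using xt[of None] by (simp add: homog_inner sgn_1_pos)
  have "sgn (u i \<bullet> ((1 / t) *\<^sub>R x) - y $ i) = \<sigma> i" for i
  proof -
    have "u i \<bullet> ((1 / t) *\<^sub>R x) - y $ i = (u i \<bullet> x - t * y $ i) / t"
      using \<open>0 < t\<close> by (simp add: field_simps)
    then show ?thesis using xt[of "Some i"] \<open>0 < t\<close> by (simp add: homog_inner sgn_divide)
  qed
  then show "\<exists>x. \<forall>i. sgn (u i \<bullet> x - y $ i) = \<sigma> i" by blast
qed

lemma certificate_support_lin_dep:
  fixes u :: "'m::finite \<Rightarrow> real^'n"
  assumes e: "certificate (homog u y) s e"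
  shows "lin_dep_fam u {i. e (Some i) \<noteq> 0}"
proof -
  have e_dep: "(\<Sum>i\<in>UNIV. e (Some i) *\<^sub>R u i) = 0" "e None = (\<Sum>i\<in>UNIV. e (Some i) * y $ i)"
    using e by (simp_all add: certificate_def homog_dependency_iff)
  have "\<exists>i. e (Some i) \<noteq> 0"
  proof (rule ccontr)
    assume "\<nexists>i. e (Some i) \<noteq> 0"
    then have "e k = 0" for k
      using e_dep(2) by (cases k) auto
    then show False using e by (simp add: certificate_def)
  qed
  moreover have "(\<Sum>i | e (Some i) \<noteq> 0. e (Some i) *\<^sub>R u i) = 0"
    using e_dep(1) by (subst sum.mono_neutral_left[of UNIV]) auto
  ultimately show ?thesis
    unfolding lin_dep_fam_def by (intro exI[of _ "\<lambda>i. e (Some i)"]) auto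
qed

lemma homog_lift_dependency:
  fixes u :: "'m::finite \<Rightarrow> real^'n"
  assumes "(\<Sum>i\<in>D. d i *\<^sub>R u i) = 0"
  shows "(\<Sum>k\<in>UNIV. case_option (\<Sum>i\<in>D. d i * y $ i) (\<lambda>i. if i \<in> D then d i else 0) k *\<^sub>R homog u y k) = 0"
  unfolding homog_dependency_iff using assms
  by (simp add: if_distrib[of "\<lambda>r. r *\<^sub>R _"] if_distrib[of "\<lambda>r. r * _"] sum.If_cases Int_def)

lemma certificate_circuit_support:
  fixes u :: "'m::finite \<Rightarrow> real^'n"
  assumes "certificate (homog u y) (case_option 1 \<sigma>) e"
  shows "\<exists>e'. certificate (homog u y) (case_option 1 \<sigma>) e' \<and> circuit u {i. e' (Some i) \<noteq> 0}"
  using assms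
proof (induction "support_weight e" arbitrary: e rule: less_induct)
  case less
  define C where "C = {i. e (Some i) \<noteq> 0}"
  show ?case
  proof (cases "circuit u C")
    case True
    then show ?thesis using less.prems unfolding C_def by blast
  next
    case False
    then obtain D d where D: "D \<subset> C" and d: "(\<Sum>i\<in>D. d i *\<^sub>R u i) = 0" "\<exists>i\<in>D. d i \<noteq> 0"
      using certificate_support_lin_dep[OF less.prems] unfolding circuit_def lin_dep_fam_def C_def
      by blast
    define c where "c = case_option (\<Sum>i\<in>D. d i * y $ i) (\<lambda>i. if i \<in> D then d i else 0)"
    have c_dep: "(\<Sum>k\<in>UNIV. c k *\<^sub>R homog u y k) = 0"
      unfolding c_def by (rule homog_lift_dependency[OF d(1)])
    have c_Some: "{i. c (Some i) \<noteq> 0} \<subset> C"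
      using D by (auto simp: c_def)
    have "\<exists>e'. certificate (homog u y) (case_option 1 \<sigma>) e' \<and> support_weight e' < support_weight e"
    proof (cases "e None = 0 \<and> c None \<noteq> 0")
      case True
      then obtain e' where "certificate (homog u y) (case_option 1 \<sigma>) e'"
        "{i. e' (Some i) \<noteq> 0} \<subset> {i. e (Some i) \<noteq> 0}"
        using certificate_shrink_None[OF _ less.prems _ c_dep _ c_Some[unfolded C_def]] by auto
      then show ?thesis using support_weight_less_Some by blast
    next
      case False
      have "{k. c k \<noteq> 0} \<subset> {k. e k \<noteq> 0}"
      proof -
        have "c k \<noteq> 0 \<Longrightarrow> e k \<noteq> 0" for k
          using False c_Some by (cases k) (auto simp: C_def)
        moreover obtain i where "e (Some i) \<noteq> 0" "c (Some i) = 0"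
          using c_Some by (auto simp: C_def)
        ultimately show ?thesis by force
      qed
      moreover have "\<exists>k. c k \<noteq> 0"
      proof -
        obtain i where "i \<in> D" "d i \<noteq> 0" using d(2) by blast
        then show ?thesis by (intro exI[of _ "Some i"]) (simp add: c_def)
      qed
      ultimately show ?thesis
        using certificate_shrink[OF less.prems c_dep] support_weight_less by blast
    qed
    then show ?thesis using less.hyps by blast
  qed
qed

lemma circuit_dependency_unique:
  fixes u :: "'m::finite \<Rightarrow> real^'n"
  assumes C: "circuit u C"
    and c: "(\<Sum>i\<in>UNIV. c $ i *\<^sub>R u i) = 0" "\<And>i. c $ i \<noteq> 0 \<longleftrightarrow> i \<in> C"
    and d: "(\<Sum>i\<in>UNIV. d $ i *\<^sub>R u i) = 0" "\<And>i. d $ i \<noteq> 0 \<longleftrightarrow> i \<in> C"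
  shows "\<exists>\<mu>. d = \<mu> *\<^sub>R c"
proof -
  obtain i0 where "i0 \<in> C" using C unfolding circuit_def lin_dep_fam_def by blast
  define \<mu> where "\<mu> = d $ i0 / c $ i0"
  define r where "r = d - \<mu> *\<^sub>R c"
  \<comment> \<open>\<open>r\<close> is a dependency vanishing at \<open>i0\<close>, so its support is a proper subset of the circuit\<close>
  have "r = 0"
  proof (rule ccontr)
    assume "r \<noteq> 0"
    define E where "E = {i. r $ i \<noteq> 0}"
    have "r $ i0 = 0"
      using c(2)[of i0] \<open>i0 \<in> C\<close> by (simp add: r_def \<mu>_def)
    moreover have "E \<subseteq> C"
    proof
      fix i assume "i \<in> E"
      then have "d $ i \<noteq> 0 \<or> c $ i \<noteq> 0" by (auto simp: E_def r_def)
      then show "i \<in> C" using c(2) d(2) by blast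
    qed
    ultimately have "E \<subset> C" using \<open>i0 \<in> C\<close> by (auto simp: E_def)
    have "(\<Sum>i\<in>UNIV. r $ i *\<^sub>R u i) = 0"
      using sum_scaleR_diff[of "\<lambda>i. d $ i" \<mu> "\<lambda>i. c $ i" u UNIV] c(1) d(1) by (simp add: r_def)
    then have "(\<Sum>i\<in>E. r $ i *\<^sub>R u i) = 0"
      by (subst sum.mono_neutral_left[of UNIV E]) (auto simp: E_def)
    moreover have "\<exists>i\<in>E. r $ i \<noteq> 0"
      using \<open>r \<noteq> 0\<close> by (auto simp: E_def vec_eq_iff)
    ultimately have "lin_dep_fam u E" unfolding lin_dep_fam_def by blast
    then show False using C \<open>E \<subset> C\<close> unfolding circuit_def by blast
  qed
  then show ?thesis unfolding r_def by auto
qed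

lemma circuit_dependency_sgn:
  fixes u :: "'m::finite \<Rightarrow> real^'n"
  assumes signs: "\<forall>C. circuit u C \<longrightarrow> sgn (circuit_vec u C \<bullet> a) = sgn (circuit_vec u C \<bullet> b)"
    and C: "circuit u C"
    and d: "(\<Sum>i\<in>UNIV. d $ i *\<^sub>R u i) = 0" "\<And>i. d $ i \<noteq> 0 \<longleftrightarrow> i \<in> C"
  shows "sgn (d \<bullet> a) = sgn (d \<bullet> b)"
proof -
  let ?c = "circuit_vec u C"
  have "(\<Sum>i\<in>UNIV. ?c $ i *\<^sub>R u i) = 0 \<and> (\<forall>i. ?c $ i \<noteq> 0 \<longleftrightarrow> i \<in> C)"
    unfolding circuit_vec_def by (rule someI[of _ d]) (use d in blast)
  then obtain \<mu> where "d = \<mu> *\<^sub>R ?c"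
    using circuit_dependency_unique[OF C _ _ d] by blast
  then show ?thesis using signs C by (simp add: sgn_mult)
qed

lemma certificate_transfer:
  fixes u :: "'m::finite \<Rightarrow> real^'n"
  assumes signs: "\<forall>C. circuit u C \<longrightarrow> sgn (circuit_vec u C \<bullet> a) = sgn (circuit_vec u C \<bullet> b)"
    and e: "certificate (homog u b) (case_option 1 \<sigma>) e" and C: "circuit u {i. e (Some i) \<noteq> 0}"
  shows "\<exists>e'. certificate (homog u a) (case_option 1 \<sigma>) e'"
proof -
  define d :: "real^'m" where "d = (\<chi> i. e (Some i))"
  define e' where "e' = e(None := d \<bullet> a)"
  have d_dep: "(\<Sum>i\<in>UNIV. d $ i *\<^sub>R u i) = 0" and e_None: "e None = d \<bullet> b"
    using e by (simp_all add: certificate_def homog_dependency_iff d_def inner_vec_def)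
  have "sgn (d \<bullet> a) = sgn (d \<bullet> b)"
    by (rule circuit_dependency_sgn[OF signs C d_dep]) (simp add: d_def)
  then have "sgn (e' k * s) = sgn (e k * s)" for k s
    by (cases k) (simp_all add: e'_def e_None sgn_mult)
  then have "0 \<le> e' k * s \<longleftrightarrow> 0 \<le> e k * s" "e' k * s \<noteq> 0 \<longleftrightarrow> e k * s \<noteq> 0" for k s
    by (metis zero_le_sgn_iff, metis sgn_eq_0_iff)
  moreover have "(\<Sum>k\<in>UNIV. e' k *\<^sub>R homog u a k) = 0"
    using d_dep by (simp add: homog_dependency_iff e'_def d_def inner_vec_def)
  ultimately show ?thesis
    using e unfolding certificate_def by metis
qed

lemma realizable_transfer:
  fixes u :: "'m::finite \<Rightarrow> real^'n"
  assumes signs: "\<forall>C. circuit u C \<longrightarrow> sgn (circuit_vec u C \<bullet> a) = sgn (circuit_vec u C \<bullet> b)"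
    and \<sigma>: "\<forall>i. \<sigma> i \<in> {-1, 0, 1}" and realizable: "\<exists>x. \<forall>i. sgn (u i \<bullet> x - a $ i) = \<sigma> i"
  shows "\<exists>x. \<forall>i. sgn (u i \<bullet> x - b $ i) = \<sigma> i"
proof (rule ccontr)
  have s: "\<forall>k. case_option 1 \<sigma> k \<in> {-1, 0, 1}"
    using \<sigma> by (simp split: option.split)
  assume "\<not> (\<exists>x. \<forall>i. sgn (u i \<bullet> x - b $ i) = \<sigma> i)"
  then obtain e where "certificate (homog u b) (case_option 1 \<sigma>) e"
    unfolding realizable_iff_homog motzkin_transposition[OF s] by blast
  then obtain e' where "certificate (homog u b) (case_option 1 \<sigma>) e'" "circuit u {i. e' (Some i) \<noteq> 0}"
    using certificate_circuit_support by blast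
  then obtain e'' where "certificate (homog u a) (case_option 1 \<sigma>) e''"
    using certificate_transfer[OF signs] by blast
  then show False
    using realizable unfolding realizable_iff_homog motzkin_transposition[OF s] by blast
qed

section \<open>The derived arrangement\<close>

lemma sgn_inner_closure:
  fixes c :: "'a::real_inner"
  assumes S: "\<forall>y\<in>S. sgn (c \<bullet> y) = \<epsilon>" and y: "y \<in> closure S"
  shows "sgn (c \<bullet> y) = 0 \<or> sgn (c \<bullet> y) = \<epsilon>"
proof -
  \<comment> \<open>for \<open>\<epsilon> \<in> {-1, 0, 1}\<close>, the closed condition \<open>\<bar>t\<bar> = \<epsilon> t\<close> says \<open>sgn t \<in> {0, \<epsilon>}\<close>\<close>
  have "S \<subseteq> {y. \<bar>c \<bullet> y\<bar> = \<epsilon> * (c \<bullet> y)}"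
    using S by (auto simp: abs_sgn mult.commute)
  moreover have "closed {y. \<bar>c \<bullet> y\<bar> = \<epsilon> * (c \<bullet> y)}"
    by (intro closed_Collect_eq continuous_intros)
  ultimately have "\<bar>c \<bullet> y\<bar> = \<epsilon> * (c \<bullet> y)"
    using closure_minimal y by blast
  moreover obtain y0 where "y0 \<in> S" using y by fastforce
  then have "\<epsilon> \<in> {-1, 0, 1}" using S[rule_format, of y0] by (auto simp: sgn_if split: if_splits)
  ultimately show ?thesis by (auto simp: sgn_if)
qed

lemma derived_open_face_closure_eq:
  assumes S: "derived_open_face u S" and T: "derived_open_face u T"
    and closure_eq: "closure S = closure T"
  shows "S = T"
proof -
  obtain \<epsilon> where \<epsilon>: "S \<noteq> {}" "S = {y. \<forall>C. circuit u C \<longrightarrow> sgn (circuit_vec u C \<bullet> y) = \<epsilon> C}"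
    using S unfolding derived_open_face_def by blast
  obtain \<delta> where \<delta>: "T \<noteq> {}" "T = {y. \<forall>C. circuit u C \<longrightarrow> sgn (circuit_vec u C \<bullet> y) = \<delta> C}"
    using T unfolding derived_open_face_def by blast
  obtain s t where "s \<in> S" "t \<in> T" using \<epsilon>(1) \<delta>(1) by blast
  have "\<epsilon> C = \<delta> C" if "circuit u C" for C
  proof -
    have "t \<in> closure S" "s \<in> closure T"
      using \<open>s \<in> S\<close> \<open>t \<in> T\<close> closure_eq closure_subset by blast+
    then have "\<delta> C = 0 \<or> \<delta> C = \<epsilon> C" "\<epsilon> C = 0 \<or> \<epsilon> C = \<delta> C"
      using sgn_inner_closure[of S "circuit_vec u C" "\<epsilon> C" t]
        sgn_inner_closure[of T "circuit_vec u C" "\<delta> C" s]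
        \<open>s \<in> S\<close> \<open>t \<in> T\<close> that \<epsilon>(2) \<delta>(2) by auto
    then show ?thesis by auto
  qed
  then show ?thesis unfolding \<epsilon>(2) \<delta>(2) by auto
qed

lemma derived_relint_same_signs:
  assumes F: "derived_face u F" and "a \<in> derived_relint u F" "b \<in> derived_relint u F"
  shows "\<forall>C. circuit u C \<longrightarrow> sgn (circuit_vec u C \<bullet> a) = sgn (circuit_vec u C \<bullet> b)"
proof -
  obtain S where S: "derived_open_face u S" "F = closure S"
    using F unfolding derived_face_def by blast
  have "derived_relint u F = S"
    unfolding derived_relint_def
    by (rule the_equality) (use S derived_open_face_closure_eq in auto)
  moreover obtain \<epsilon> where "S = {y. \<forall>C. circuit u C \<longrightarrow> sgn (circuit_vec u C \<bullet> y) = \<epsilon> C}"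
    using S(1) unfolding derived_open_face_def by blast
  ultimately show ?thesis using assms(2,3) by auto
qed

section \<open>Faces of the polyhedra\<close>

lemma Pol_eq_Inter:
  "Pol u y A B C = (\<Inter>i\<in>A. {x. u i \<bullet> x = y $ i}) \<inter> (\<Inter>i\<in>B. {x. u i \<bullet> x \<le> y $ i})
     \<inter> (\<Inter>i\<in>C. {x. u i \<bullet> x \<ge> y $ i})"
  by (auto simp: Pol_def)

lemma convex_Pol: "convex (Pol u y A B C)"
  unfolding Pol_eq_Inter
  by (intro convex_Int convex_INT convex_hyperplane convex_halfspace_le convex_halfspace_ge)

lemma rel_interior_supporting_hyperplane:
  fixes S :: "'a::euclidean_space set"
  assumes "convex S" "\<And>x. x \<in> S \<Longrightarrow> a \<bullet> x \<le> b" "z \<in> rel_interior S" "a \<bullet> z = b"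
  shows "S \<subseteq> {x. a \<bullet> x = b}"
proof -
  have face: "S \<inter> {x. a \<bullet> x = b} face_of S"
    using assms(1,2) by (rule face_of_Int_supporting_hyperplane_le)
  have "z \<in> (S \<inter> {x. a \<bullet> x = b}) \<inter> rel_interior S"
    using assms(3,4) rel_interior_subset by auto
  then have "S \<subseteq> S \<inter> {x. a \<bullet> x = b}"
    by (intro subset_of_face_of[OF face subset_refl]) blast
  then show ?thesis by blast
qed

lemma rel_interior_Pol:
  assumes z: "z \<in> Pol u y A B C"
    and strict: "\<forall>i\<in>B - A. u i \<bullet> z < y $ i" "\<forall>i\<in>C - A. u i \<bullet> z > y $ i"
  shows "z \<in> rel_interior (Pol u y A B C)"
proof -
  define V where "V = (\<Inter>i\<in>B - A. {x. u i \<bullet> x < y $ i}) \<inter> (\<Inter>i\<in>C - A. {x. u i \<bullet> x > y $ i})"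
  have "open V" unfolding V_def
    by (auto intro!: open_Int open_INT open_halfspace_lt open_halfspace_gt)
  moreover have "z \<in> V" using strict by (simp add: V_def)
  ultimately obtain e where "0 < e" "ball z e \<subseteq> V"
    using open_contains_ball by blast
  moreover have "affine hull Pol u y A B C \<subseteq> (\<Inter>i\<in>A. {x. u i \<bullet> x = y $ i})"
    by (intro hull_minimal affine_Inter) (auto simp: affine_hyperplane Pol_def)
  ultimately have "x \<in> Pol u y A B C" if "x \<in> ball z e \<inter> affine hull Pol u y A B C" for x
  proof -
    have eq: "\<forall>i\<in>A. u i \<bullet> x = y $ i" and "x \<in> V"
      using that \<open>ball z e \<subseteq> V\<close> \<open>affine hull Pol u y A B C \<subseteq> _\<close> by blast+
    show ?thesis unfolding Pol_def
    proof (intro CollectI conjI ballI)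
      fix i assume "i \<in> B"
      then show "u i \<bullet> x \<le> y $ i" using eq \<open>x \<in> V\<close> by (cases "i \<in> A") (auto simp: V_def less_imp_le)
    next
      fix i assume "i \<in> C"
      then show "u i \<bullet> x \<ge> y $ i" using eq \<open>x \<in> V\<close> by (cases "i \<in> A") (auto simp: V_def less_imp_le)
    qed (use eq in blast)
  qed
  then have "ball z e \<inter> affine hull Pol u y A B C \<subseteq> Pol u y A B C" by blast
  then show ?thesis
    using mem_rel_interior_ball[of z "Pol u y A B C"] z \<open>0 < e\<close> by auto
qed

lemma act_I_rel_interior:
  fixes G :: "(real^'n) set"
  assumes "G \<noteq> {}" "convex G"
  obtains z where "z \<in> rel_interior G" "act_I u y G = {i. u i \<bullet> z = y $ i}"
proof -
  have "\<exists>z. z \<in> rel_interior G" using assms rel_interior_eq_empty by blast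
  then have "(SOME z. z \<in> rel_interior G) \<in> rel_interior G" by (rule someI_ex)
  then show thesis by (rule that) (simp add: act_I_def)
qed

text \<open>The sign vector of \<open>\<langle>u\<^sub>i, x\<rangle> - y\<^sub>i\<close> at the relative interior points of the face with
  active set \<open>A\<close>.\<close>

definition face_sign :: "'m set \<Rightarrow> 'm set \<Rightarrow> 'm \<Rightarrow> real" where
  "face_sign K A i = (if i \<in> A then 0 else if i \<in> K then 1 else -1)"

lemma realizes_face_sign_iff:
  assumes part: "I \<union> J \<union> K = UNIV" "J \<inter> K = {}" and "I \<subseteq> A"
  shows "(\<forall>i. sgn (u i \<bullet> x - y $ i) = face_sign K A i) \<longleftrightarrow>
    x \<in> Pol u y A (J - A) (K - A) \<and> (\<forall>i. i \<notin> A \<longrightarrow> u i \<bullet> x \<noteq> y $ i)"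
proof -
  have cover: "i \<in> J - K \<or> i \<in> K - J" if "i \<notin> A" for i
    using that part assms(3) by blast
  have "sgn (u i \<bullet> x - y $ i) = face_sign K A i \<longleftrightarrow>
      (i \<in> A \<longrightarrow> u i \<bullet> x = y $ i) \<and> (i \<in> J - A \<longrightarrow> u i \<bullet> x < y $ i) \<and> (i \<in> K - A \<longrightarrow> u i \<bullet> x > y $ i)" for i
  proof (cases "i \<in> A")
    case False
    then show ?thesis using cover[OF False] by (auto simp: face_sign_def sgn_if)
  qed (simp add: face_sign_def sgn_if)
  then show ?thesis using cover by (fastforce simp: Pol_def less_le)
qed

lemma face_Pol_active:
  assumes part: "I \<union> J \<union> K = UNIV" "J \<inter> K = {}"
    and G: "G face_of Pol u y I J K" "G \<noteq> {}"
  defines "A \<equiv> act_I u y G"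
  shows "I \<subseteq> A" "G = Pol u y A (J - A) (K - A)"
    "\<exists>x. \<forall>i. sgn (u i \<bullet> x - y $ i) = face_sign K A i"
proof -
  define P where "P = Pol u y I J K"
  define Q where "Q = Pol u y A (J - A) (K - A)"
  have "convex G" using G(1) face_of_imp_convex by blast
  obtain z where z: "z \<in> rel_interior G" "A = {i. u i \<bullet> z = y $ i}"
    using act_I_rel_interior[OF G(2) \<open>convex G\<close>] unfolding A_def by blast
  have "G \<subseteq> P" using G(1) face_of_imp_subset unfolding P_def by blast
  moreover have "z \<in> G" using z(1) rel_interior_subset by blast
  ultimately have "z \<in> P" by blast
  then show "I \<subseteq> A" by (auto simp: z(2) P_def Pol_def)
  have z_Q: "z \<in> Q" and z_strict: "\<forall>i. i \<notin> A \<longrightarrow> u i \<bullet> z \<noteq> y $ i"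
    using \<open>z \<in> P\<close> by (auto simp: z(2) P_def Q_def Pol_def)
  then show "\<exists>x. \<forall>i. sgn (u i \<bullet> x - y $ i) = face_sign K A i"
    using realizes_face_sign_iff[OF part \<open>I \<subseteq> A\<close>] unfolding Q_def by blast
  \<comment> \<open>each constraint tight at the relative interior point \<open>z\<close> is tight on all of \<open>G\<close>\<close>
  have "G \<subseteq> {x. u i \<bullet> x = y $ i}" if "i \<in> A" for i
  proof -
    have "i \<in> I \<or> i \<in> J \<or> i \<in> K" using part(1) by blast
    moreover have "u i \<bullet> z = y $ i" using that z(2) by blast
    ultimately show ?thesis
      using \<open>G \<subseteq> P\<close> \<open>convex G\<close> z(1)
        rel_interior_supporting_hyperplane[of G "u i" "y $ i" z]
        rel_interior_supporting_hyperplane[of G "- u i" "- y $ i" z]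
      by (fastforce simp: P_def Pol_def)
  qed
  then have "G \<subseteq> Q"
    using \<open>G \<subseteq> P\<close> by (auto simp: P_def Q_def Pol_def)
  moreover have "Q \<subseteq> G"
  proof (rule subset_of_face_of[OF G(1)])
    show "Q \<subseteq> Pol u y I J K"
      using \<open>I \<subseteq> A\<close> by (auto simp: Q_def Pol_def)
    have "z \<in> rel_interior Q"
      unfolding Q_def
      by (rule rel_interior_Pol) (use z_Q z_strict in \<open>auto simp: Q_def Pol_def less_le\<close>)
    then show "G \<inter> rel_interior Q \<noteq> {}" using \<open>z \<in> G\<close> by blast
  qed
  ultimately show "G = Pol u y A (J - A) (K - A)" unfolding Q_def by blast
qed

lemma Pol_tight_face_of:
  assumes part: "I \<union> J \<union> K = UNIV" and "I \<subseteq> A"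
  shows "Pol u y A (J - A) (K - A) face_of Pol u y I J K"
proof -
  define P where "P = Pol u y I J K"
  define Q where "Q = Pol u y A (J - A) (K - A)"
  have "Q = \<Inter> (insert P ((\<lambda>i. P \<inter> {x. u i \<bullet> x = y $ i}) ` A))"
    using \<open>I \<subseteq> A\<close> by (auto simp: P_def Q_def Pol_def)
  also have "\<dots> face_of P"
  proof (rule face_of_Inter)
    fix T assume "T \<in> insert P ((\<lambda>i. P \<inter> {x. u i \<bullet> x = y $ i}) ` A)"
    then consider (all) "T = P" | (tight) i where "T = P \<inter> {x. u i \<bullet> x = y $ i}"
      by blast
    then show "T face_of P"
    proof cases
      case all
      then show ?thesis by (simp add: P_def convex_Pol face_of_refl)
    next
      case tight
      consider (I) "i \<in> I" | (J) "i \<in> J" | (K) "i \<in> K" using part(1) by blast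
      then show ?thesis
      proof cases
        case I
        then have "T = P" using tight by (auto simp: P_def Pol_def)
        then show ?thesis by (simp add: P_def convex_Pol face_of_refl)
      next
        case J
        then show ?thesis unfolding tight P_def
          by (intro face_of_Int_supporting_hyperplane_le convex_Pol) (auto simp: Pol_def)
      next
        case K
        then show ?thesis unfolding tight P_def
          by (intro face_of_Int_supporting_hyperplane_ge convex_Pol) (auto simp: Pol_def)
      qed
    qed
  qed simp
  finally show ?thesis unfolding P_def Q_def .
qed

lemma Pol_active_face:
  assumes part: "I \<union> J \<union> K = UNIV" "J \<inter> K = {}" and "I \<subseteq> A"
    and realizable: "\<exists>x. \<forall>i. sgn (u i \<bullet> x - y $ i) = face_sign K A i"
  defines "Q \<equiv> Pol u y A (J - A) (K - A)"
  shows "Q face_of Pol u y I J K" "Q \<noteq> {}" "act_I u y Q = A"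
proof -
  obtain x0 where x0: "x0 \<in> Q" "\<forall>i. i \<notin> A \<longrightarrow> u i \<bullet> x0 \<noteq> y $ i"
    using realizable realizes_face_sign_iff[OF part \<open>I \<subseteq> A\<close>] unfolding Q_def by blast
  then show "Q \<noteq> {}" by blast
  show "Q face_of Pol u y I J K"
    unfolding Q_def using part(1) \<open>I \<subseteq> A\<close> by (rule Pol_tight_face_of)
  have "convex Q" unfolding Q_def by (rule convex_Pol)
  obtain z where z: "z \<in> rel_interior Q" "act_I u y Q = {i. u i \<bullet> z = y $ i}"
    using act_I_rel_interior[OF \<open>Q \<noteq> {}\<close> \<open>convex Q\<close>] by blast
  have "u i \<bullet> z \<noteq> y $ i" if "i \<notin> A" for i
  proof
    assume tight: "u i \<bullet> z = y $ i"
    \<comment> \<open>a constraint tight at the relative interior point would be tight at \<open>x0\<close>\<close>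
    have "i \<in> J - A \<or> i \<in> K - A" using that part(1) \<open>I \<subseteq> A\<close> by blast
    then have "Q \<subseteq> {x. u i \<bullet> x = y $ i}"
      using tight \<open>convex Q\<close> z(1)
        rel_interior_supporting_hyperplane[of Q "u i" "y $ i" z]
        rel_interior_supporting_hyperplane[of Q "- u i" "- y $ i" z]
      by (fastforce simp: Q_def Pol_def)
    then show False using x0 that by blast
  qed
  moreover have "z \<in> Q" using z(1) rel_interior_subset by blast
  ultimately show "act_I u y Q = A"
    unfolding z(2) by (auto simp: Q_def Pol_def)
qed

section \<open>The map \<open>\<Phi>\<close>\<close>

lemma Phi_nonempty_face:
  fixes u :: "'m::finite \<Rightarrow> real^'n"
  assumes signs: "\<forall>C. circuit u C \<longrightarrow> sgn (circuit_vec u C \<bullet> a) = sgn (circuit_vec u C \<bullet> b)"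
    and part: "I \<union> J \<union> K = UNIV" "J \<inter> K = {}"
    and G: "G face_of Pol u a I J K" "G \<noteq> {}"
  shows "Phi u a b J K G face_of Pol u b I J K" "Phi u a b J K G \<noteq> {}"
    "act_I u b (Phi u a b J K G) = act_I u a G"
proof -
  define A where "A = act_I u a G"
  have "I \<subseteq> A" and realizable: "\<exists>x. \<forall>i. sgn (u i \<bullet> x - a $ i) = face_sign K A i"
    using face_Pol_active[OF part G] unfolding A_def by blast+
  have "\<forall>i. face_sign K A i \<in> {-1, 0, 1}" by (simp add: face_sign_def)
  then have "\<exists>x. \<forall>i. sgn (u i \<bullet> x - b $ i) = face_sign K A i"
    using realizable_transfer[OF signs _ realizable] by blast
  moreover have "Phi u a b J K G = Pol u b A (J - A) (K - A)"
    using G(2) by (simp add: Phi_def A_def)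
  ultimately show "Phi u a b J K G face_of Pol u b I J K" "Phi u a b J K G \<noteq> {}"
    "act_I u b (Phi u a b J K G) = act_I u a G"
    using Pol_active_face[OF part \<open>I \<subseteq> A\<close>] unfolding A_def by simp_all
qed

lemma Phi_face_of:
  fixes u :: "'m::finite \<Rightarrow> real^'n"
  assumes signs: "\<forall>C. circuit u C \<longrightarrow> sgn (circuit_vec u C \<bullet> a) = sgn (circuit_vec u C \<bullet> b)"
    and part: "I \<union> J \<union> K = UNIV" "J \<inter> K = {}"
    and G: "G face_of Pol u a I J K"
  shows "Phi u a b J K G face_of Pol u b I J K"
  using Phi_nonempty_face(1)[OF signs part G] by (cases "G = {}") (simp_all add: Phi_def)

lemma Phi_inverse:
  fixes u :: "'m::finite \<Rightarrow> real^'n"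
  assumes signs: "\<forall>C. circuit u C \<longrightarrow> sgn (circuit_vec u C \<bullet> a) = sgn (circuit_vec u C \<bullet> b)"
    and part: "I \<union> J \<union> K = UNIV" "J \<inter> K = {}"
    and G: "G face_of Pol u a I J K"
  shows "Phi u b a J K (Phi u a b J K G) = G"
proof (cases "G = {}")
  case True
  then show ?thesis by (simp add: Phi_def)
next
  case False
  define A where "A = act_I u a G"
  have "Phi u a b J K G \<noteq> {}" "act_I u b (Phi u a b J K G) = A"
    using Phi_nonempty_face[OF signs part G False] unfolding A_def by simp_all
  then have "Phi u b a J K (Phi u a b J K G) = Pol u a A (J - A) (K - A)"
    by (simp add: Phi_def)
  also have "\<dots> = G"
    using face_Pol_active(2)[OF part G False] unfolding A_def by simp
  finally show ?thesis .
qed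

theorem mainTheorem10:
  fixes u :: "'m::finite \<Rightarrow> real^'n"
    and a b :: "real^'m"
    and F :: "(real^'m) set"
    and I J K :: "'m set"
  assumes nonzero: "\<forall>i. u i \<noteq> 0"
    and F: "derived_face u F"
    and ab: "a \<in> derived_relint u F" "b \<in> derived_relint u F"
    and part: "I \<union> J \<union> K = UNIV" "I \<inter> J = {}" "I \<inter> K = {}" "J \<inter> K = {}"
  shows "(\<forall>G. G face_of Pol u a I J K \<longrightarrow> Phi u a b J K G face_of Pol u b I J K)
    \<and> bij_betw (Phi u a b J K) {G. G face_of Pol u a I J K} {G. G face_of Pol u b I J K}
    \<and> (\<forall>G. G face_of Pol u a I J K \<and> G \<noteq> {} \<longrightarrow>
          Phi u a b J K G \<noteq> {}
        \<and> act_I u b (Phi u a b J K G) = act_I u a G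
        \<and> J - act_I u b (Phi u a b J K G) = J - act_I u a G
        \<and> K - act_I u b (Phi u a b J K G) = K - act_I u a G)"
proof -
  have signs_ab: "\<forall>C. circuit u C \<longrightarrow> sgn (circuit_vec u C \<bullet> a) = sgn (circuit_vec u C \<bullet> b)"
    using derived_relint_same_signs[OF F ab] .
  then have signs_ba: "\<forall>C. circuit u C \<longrightarrow> sgn (circuit_vec u C \<bullet> b) = sgn (circuit_vec u C \<bullet> a)"
    by simp
  note face_ab = Phi_face_of[OF signs_ab part(1,4)]
  note face_ba = Phi_face_of[OF signs_ba part(1,4)]
  have "bij_betw (Phi u a b J K) {G. G face_of Pol u a I J K} {G. G face_of Pol u b I J K}"
    by (rule bij_betw_byWitness[where f' = "Phi u b a J K"])
      (use Phi_inverse[OF signs_ab part(1,4)] Phi_inverse[OF signs_ba part(1,4)] face_ab face_ba in auto)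
  then show ?thesis
    using face_ab Phi_nonempty_face(2,3)[OF signs_ab part(1,4)] by simp
qed

end
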